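(* (Perfect completeness of the Five Cells protocol.) Let a Five Cells puzzle on an $m\times n$ grid be given. If the prover $P$ knows a solution of the puzzle and follows the Five Cells zero-knowledge protocol described in the context, then the verifier $V$ always accepts.
   Context: Five Cells puzzle: an $m\times n$ rectangular grid in which some cells contain a number. A solution is a partition of the grid into pentominoes (connected sets of 5 cells; a pentomino obtained from another by rotation or reflection counts as a different type, giving 63 types) such that for every numbered cell, the number equals the number of that cell's four edges which are borders of pentominoes (edges on the outer boundary of the grid count as borders). Labelling every cell with this count gives the "extended solution". Cards: each card has either an integer or nothing (a blank card) on its front; all backs are indistinguishable. A pile-shifting shuffle applied to a matrix of face-down cards (each entry may be a stack, all stacks in a row of equal size) cyclically shifts its columns by a uniformly random amount unknown to everyone. Chosen cut protocol: given face-down cards (or equal-size stacks) $c_1,\dots,c_q$ and a secret index $i$ chosen by $P$, $P$ forms a $3\times q$ matrix with row 1 equal to $c_1,\dots,c_q$, row 2 a face-down card $1$ in column $i$ and $0$ elsewhere, row 3 a card $1$ in column 1 and $0$ elsewhere (turned face-down); a pile-shifting shuffle is applied; row 2 is revealed and the card of row 1 above the $1$ is $c_i$; after $c_i$ has been used it is put back in place, all face-up cards are turned face-down, another pile-shifting shuffle is applied, row 3 is revealed and the columns are cyclically shifted so that its $1$ returns to column 1, restoring the original order. Printing protocol: given a face-down $p\times q$ template and a face-down $p\times q$ area of cards, each template card is placed on the corresponding area card, forming $pq$ stacks of two; for each stack, $P$ uses the chosen cut protocol to select one of its two cards, the selected card is revealed, $V$ rejects unless it is blank, and it is removed. Five Cells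 protocol: $P$ publicly puts a blank card on every cell, appends 4 rows and 4 columns of blank "dummy" cards below and to the right, and turns all cards face-down, giving an $(m+4)\times(n+4)$ matrix, read row by row as a sequence $a_1,a_2,\dots$ (so the card below $a_j$ is $a_{j+n+4}$). $P$ builds 63 templates, one per pentomino type: a $5\times5$ matrix with the pentomino at the top-left, each of its cells a card with the number of that cell's edges which are borders of the pentomino, all other cards blank; $V$ checks all templates. Let $B_1,\dots,B_k$ ($k=mn/5$) be the pentominoes of $P$'s solution. For $i=1,\dots,k$: (1) using the chosen cut protocol on the sequence, $P$ selects the top-left card of a $5\times5$ area (cards at positions $j+r(n+4)+c$, $0\le r,c\le 4$) containing $B_i$ in the same position as in its template; (2) using the chosen cut protocol, $P$ selects the template of $B_i$'s type; (3) the printing protocol is applied to this template and area; (4) $P$ reconstructs the used template and returns it to the pile, and $V$ checks again that all 63 templates are correct (rejecting otherwise). Finally $P$ reveals the cards on the originally numbered cells and $V$ rejects unless they match the given numbers; $P$ reveals all dummy cards and $V$ rejects unless they are blank. Otherwise $V$ accepts. *)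

theory Defs
  imports Main
begin

type_synonym cell = "int \<times> int"

definition grid :: "nat \<Rightarrow> nat \<Rightarrow> cell set" where
  "grid m n = {(r, c). 0 \<le> r \<and> r < int m \<and> 0 \<le> c \<and> c < int n}"

definition nbrs :: "cell \<Rightarrow> cell set" where
  "nbrs x = (case x of (r, c) \<Rightarrow> {(r - 1, c), (r + 1, c), (r, c - 1), (r, c + 1)})"

definition connected_cells :: "cell set \<Rightarrow> bool" where
  "connected_cells S \<longleftrightarrow> S \<noteq> {} \<and>
     (\<forall>x\<in>S. \<forall>y\<in>S. (x, y) \<in> ({(a, b). a \<in> S \<and> b \<in> S \<and> b \<in> nbrs a})\<^sup>*)"

definition pentomino :: "cell set \<Rightarrow> bool" where
  "pentomino S \<longleftrightarrow> finite S \<and> card S = 5 \<and> connected_cells S"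

text \<open>Pentomino types: translation classes of pentominoes (rotations/reflections are
different types), represented by the normalised member whose minimal row and minimal
column are 0 (the pentomino placed at the top-left).\<close>

definition norm_pent :: "cell set \<Rightarrow> cell set" where
  "norm_pent B = (\<lambda>(r, c). (r - Min (fst ` B), c - Min (snd ` B))) ` B"

definition pent_types :: "cell set set" where
  "pent_types = {T. pentomino T \<and> Min (fst ` T) = 0 \<and> Min (snd ` T) = 0}"

text \<open>Number of edges of cell x that are borders of pentominoes of the partition Ps:
an edge is not a border iff both of its cells lie in the same pentomino (edges on the
outer boundary of the grid are borders).\<close>

definition border_count :: "cell set set \<Rightarrow> cell \<Rightarrow> nat" where
  "border_count Ps x = card {y \<in> nbrs x. \<not> (\<exists>B\<in>Ps. x \<in> B \<and> y \<in> B)}"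

definition is_solution :: "nat \<Rightarrow> nat \<Rightarrow> (cell \<Rightarrow> nat option) \<Rightarrow> cell set set \<Rightarrow> bool" where
  "is_solution m n clue Ps \<longleftrightarrow>
     (\<forall>B\<in>Ps. pentomino B) \<and>
     (\<forall>B\<in>Ps. \<forall>B'\<in>Ps. B \<noteq> B' \<longrightarrow> B \<inter> B' = {}) \<and>
     \<Union>Ps = grid m n \<and>
     (\<forall>x k. clue x = Some k \<longrightarrow> border_count Ps x = k)"

text \<open>A card shows an integer or is blank (None).\<close>

type_synonym card = "int option"

text \<open>Pile-shifting shuffle by amount s: the column at index j moves to index (j+s) mod q.\<close>

definition shiftR :: "nat \<Rightarrow> 'a list \<Rightarrow> 'a list" where
  "shiftR s xs = rotate (length xs - s mod length xs) xs"

definition marker :: "nat \<Rightarrow> nat \<Rightarrow> card list" where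
  "marker k q = map (\<lambda>j. if j = k then Some 1 else Some 0) [0..<q]"

definition reveal1 :: "card list \<Rightarrow> nat" where
  "reveal1 xs = hd (filter (\<lambda>j. xs ! j = Some 1) [0..<length xs])"

text \<open>The function use receives the revealed position p and the shuffled row 1
(whose card at p is the selected one) and returns the row after using the card,
together with some result.  Afterwards the original order is restored.\<close>

definition chosen_cut ::
  "nat \<Rightarrow> nat \<Rightarrow> nat \<Rightarrow> 'a list \<Rightarrow> (nat \<Rightarrow> 'a list \<Rightarrow> 'a list \<times> 'b) \<Rightarrow> 'a list \<times> 'b" where
  "chosen_cut s1 s2 i cs use =
    (let q = length cs;
         row1 = shiftR s1 cs;
         row2 = shiftR s1 (marker i q);
         row3 = shiftR s1 (marker 0 q);
         p = reveal1 row2;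
         (row1', res) = use p row1;
         row1'' = shiftR s2 row1';
         row3' = shiftR s2 row3;
         k = reveal1 row3'
     in (shiftR (q - k) row1'', res))"

text \<open>Printing of one stack (template card tc on area card ac).  The selected card is
revealed (V requires it to be blank) and removed (None); the remaining card stays.\<close>

definition print_stack :: "nat \<Rightarrow> nat \<Rightarrow> card \<Rightarrow> card \<Rightarrow> card \<times> bool" where
  "print_stack s1 s2 tc ac =
    (let i = (if tc = None then 0 else 1);
         (st, ok) = chosen_cut s1 s2 i [Some tc, Some ac]
                      (\<lambda>p row. (row[p := None], row ! p = Some None))
     in (the (hd (filter (\<lambda>x. x \<noteq> None) st)), ok))"

text \<open>Printing protocol: template T (5x5, row-major, 25 cards) onto the 5x5 area of the
(shuffled) sequence xs whose top-left card is at position p; w = n + 4 is the row length.\<close>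

definition print_area ::
  "(nat \<Rightarrow> nat) \<Rightarrow> nat \<Rightarrow> card list \<Rightarrow> nat \<Rightarrow> card list \<Rightarrow> card list \<times> bool" where
  "print_area rho w T p xs =
    fold (\<lambda>k (ys, ok).
           let a = (p + (k div 5) * w + k mod 5) mod length ys;
               (c, ok') = print_stack (rho (4 + 2 * k)) (rho (5 + 2 * k)) (T ! k) (ys ! a)
           in (ys[a := c], ok \<and> ok'))
      [0..<25] (xs, True)"

definition tmpl :: "cell set \<Rightarrow> card list" where
  "tmpl T = map (\<lambda>k. let x = (int (k div 5), int (k mod 5)) in
                   if x \<in> T then Some (int (card {y \<in> nbrs x. y \<notin> T})) else None)
              [0..<25]"

definition topleft :: "nat \<Rightarrow> cell set \<Rightarrow> nat" where
  "topleft w B = nat (Min (fst ` B)) * w + nat (Min (snd ` B))"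

definition tidx :: "cell set list \<Rightarrow> cell set \<Rightarrow> nat" where
  "tidx ts T = hd (filter (\<lambda>k. ts ! k = T) [0..<length ts])"

definition templates_ok :: "cell set list \<Rightarrow> card list list \<Rightarrow> bool" where
  "templates_ok ts pile \<longleftrightarrow> length pile = length ts \<and> (\<forall>k < length ts. pile ! k = tmpl (ts ! k))"

definition five_cells_round ::
  "cell set list \<Rightarrow> nat \<Rightarrow> (nat \<Rightarrow> nat) \<Rightarrow> nat \<Rightarrow> nat \<Rightarrow> card list \<times> card list list
     \<Rightarrow> (card list \<times> card list list) \<times> bool" where
  "five_cells_round ts w rho j ti st =
    (case st of (xs, pile) \<Rightarrow>
      let useA = (\<lambda>p row.
             let (pile', (row', ok)) =
                   chosen_cut (rho 2) (rho 3) ti pile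
                     (\<lambda>p' prow. (prow[p' := []], print_area rho w (prow ! p') p row))
             in (row', (pile', ok)));
          (xs', (pile', ok)) = chosen_cut (rho 0) (rho 1) j xs useA;
          pile'' = pile'[ti := tmpl (ts ! ti)]
      in ((xs', pile''), ok \<and> templates_ok ts pile''))"

text \<open>Whole protocol with the honest prover who knows the solution and processes its
pentominoes in the order Bs; R i is the randomness of round i.  Returns whether V accepts.\<close>

definition five_cells_accepts ::
  "nat \<Rightarrow> nat \<Rightarrow> (cell \<Rightarrow> nat option) \<Rightarrow> cell set list \<Rightarrow> cell set list
     \<Rightarrow> (nat \<Rightarrow> nat \<Rightarrow> nat) \<Rightarrow> bool" where
  "five_cells_accepts m n clue ts Bs R =
    (let w = n + 4;
         L = (m + 4) * w;
         pile0 = map tmpl ts;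
         step = (\<lambda>(i, B) (st, ok).
                   let (st', ok') = five_cells_round ts w (R i) (topleft w B) (tidx ts (norm_pent B)) st
                   in (st', ok \<and> ok'));
         ((xs, pile), ok) = fold step (zip [0..<length Bs] Bs)
                              ((replicate L None, pile0), templates_ok ts pile0)
     in ok \<and>
        (\<forall>q < L. let r = q div w; c = q mod w in
           if r < m \<and> c < n
           then (case clue (int r, int c) of None \<Rightarrow> True | Some v \<Rightarrow> xs ! q = Some (int v))
           else xs ! q = None))"

end

theory Submission
  imports Defs
begin

text \<open>Every operation the honest prover performs on a face-down sequence during a chosen cut
  commutes with cyclic shifts, and the final re-shift undoes both shuffles; so, whatever the
  shuffle amounts, a chosen cut acts exactly like direct access to the secret index.  A round
  therefore just prints the template of the current pentomino's type onto the 5x5 area whose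
  top-left corner is that of the pentomino's bounding box, and leaves the template pile unchanged.

  A pentomino spans at most five rows and five columns, and translation preserves neighbourhoods;
  so the nonblank template cards land exactly on the cells of the pentomino and carry their border
  counts in the partition, while blank template cards leave the area untouched.  As the pentominoes
  are disjoint, every printed cell is still blank when it is printed.  After all rounds the grid
  shows the extended solution, which matches every clue, and the dummy cards are still blank.\<close>

section \<open>Cyclic shifts\<close>

lemma mod_add_complement_eq:
  assumes "0 < (q::nat)"
  shows "(x + s + (q - s mod q)) mod q = x mod q"
proof -
  have "s div q * q + s mod q = s" "s mod q < q" using assms by simp_all
  then have eq: "x + s + (q - s mod q) = x + q + s div q * q" by linarith
  show ?thesis unfolding eq by simp
qed

lemma mod_add_mod_complement:
  assumes "i < (q::nat)"
  shows "((i + s) mod q + (q - s mod q)) mod q = i"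
proof -
  have "((i + s) mod q + (q - s mod q)) mod q = (i + s + (q - s mod q)) mod q"
    by (rule mod_add_left_eq)
  also have "\<dots> = i mod q" by (rule mod_add_complement_eq) (use assms in simp)
  finally show ?thesis using assms by simp
qed

lemma mod_add_right_cancel_less:
  assumes "i < (q::nat)" "j < q"
  shows "(i + s) mod q = (j + s) mod q \<longleftrightarrow> i = j"
  using mod_add_mod_complement[OF assms(1), of s] mod_add_mod_complement[OF assms(2), of s] by metis

lemma length_shiftR [simp]: "length (shiftR s xs) = length xs"
  by (simp add: shiftR_def)

lemma nth_shiftR_shifted:
  assumes "i < length xs"
  shows "shiftR s xs ! ((i + s) mod length xs) = xs ! i"
proof -
  have "0 < length xs" using assms by linarith
  then have idx: "(i + s) mod length xs < length xs" by simp
  show ?thesis unfolding shiftR_def nth_rotate[OF idx] add.commute[of "length xs - s mod length xs"]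
      mod_add_mod_complement[OF assms] ..
qed

lemma shiftR_eqI:
  assumes "length ys = length xs"
    and "\<And>i. i < length xs \<Longrightarrow> ys ! ((i + s) mod length xs) = xs ! i"
  shows "ys = shiftR s xs"
proof (rule nth_equalityI)
  fix k assume "k < length ys"
  then have k: "k < length xs" using assms(1) by simp
  define i where "i = (k + (length xs - s mod length xs)) mod length xs"
  have i: "i < length xs" unfolding i_def by (rule mod_less_divisor) (use k in linarith)
  have "(i + s) mod length xs = (k + s + (length xs - s mod length xs)) mod length xs"
    unfolding i_def mod_add_left_eq by (simp only: ac_simps)
  also have "\<dots> = k mod length xs" by (rule mod_add_complement_eq) (use k in linarith)
  finally have "(i + s) mod length xs = k" using k by simp
  then show "ys ! k = shiftR s xs ! k" using assms(2)[OF i] nth_shiftR_shifted[OF i, of s] by simp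
qed (simp add: assms)

lemma shiftR_list_update:
  assumes "i < length xs"
  shows "shiftR s (xs[i := v]) = (shiftR s xs)[(i + s) mod length xs := v]"
proof (rule sym, rule shiftR_eqI)
  fix j assume j: "j < length (xs[i := v])"
  have "0 < length xs" using assms by linarith
  then have "(i + s) mod length xs < length (shiftR s xs)" by simp
  moreover have "(j + s) mod length xs = (i + s) mod length xs \<longleftrightarrow> j = i"
    using assms j by (simp add: mod_add_right_cancel_less)
  ultimately show "(shiftR s xs)[(i + s) mod length xs := v] ! ((j + s) mod length (xs[i := v]))
      = xs[i := v] ! j"
    using j nth_shiftR_shifted[of j xs s] by (auto simp: nth_list_update)
qed simp

lemma shiftR_shiftR: "shiftR a (shiftR b xs) = shiftR (a + b) xs"
proof (rule shiftR_eqI)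
  fix i assume i: "i < length xs"
  then have "0 < length xs" by linarith
  then have ib: "(i + b) mod length (shiftR b xs) < length (shiftR b xs)" by simp
  have "(i + (a + b)) mod length xs = ((i + b) mod length xs + a) mod length xs"
    unfolding mod_add_left_eq by (simp add: ac_simps)
  then show "shiftR a (shiftR b xs) ! ((i + (a + b)) mod length xs) = xs ! i"
    using nth_shiftR_shifted[OF ib, of a] nth_shiftR_shifted[OF i, of b] by simp
qed simp

lemma shiftR_unshift:
  assumes "length xs = q"
  shows "shiftR (q - s mod q) (shiftR s xs) = xs"
proof (cases "q = 0")
  case False
  then have "(q - s mod q + s) mod length xs = 0"
    using assms mod_add_complement_eq[of q 0 s] by (simp add: ac_simps)
  then show ?thesis unfolding shiftR_shiftR by (simp add: shiftR_def)
qed (use assms in \<open>simp add: shiftR_def\<close>)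

lemma length_marker [simp]: "length (marker i q) = q"
  by (simp add: marker_def)

lemma shiftR_marker:
  assumes "i < q"
  shows "shiftR s (marker i q) = marker ((i + s) mod q) q"
  by (rule sym, rule shiftR_eqI) (use assms in \<open>auto simp: marker_def mod_add_right_cancel_less\<close>)

lemma reveal1_marker:
  assumes "i < q"
  shows "reveal1 (marker i q) = i"
proof -
  have "filter (\<lambda>j. marker i q ! j = Some 1) [0..<q] = filter (\<lambda>j. j = i) [0..<q]"
    by (rule filter_cong) (simp_all add: marker_def)
  also have "\<dots> = [i]"
  proof -
    have "[0..<q] = [0..<i] @ i # [Suc i..<q]"
      using assms upt_add_eq_append[of 0 i "q - i"] by (simp add: upt_conv_Cons)
    then show ?thesis by (simp add: filter_empty_conv)
  qed
  finally show ?thesis by (simp add: reveal1_def)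
qed

section \<open>The chosen cut and the printing protocol\<close>

lemma chosen_cut_eqI:
  assumes "i < length cs"
    and "use ((i + s1) mod length cs) (shiftR s1 cs) = (shiftR s1 G, r)"
    and "length G = length cs"
  shows "chosen_cut s1 s2 i cs use = (G, r)"
proof -
  let ?q = "length cs"
  have q: "0 < ?q" using assms(1) by linarith
  have "reveal1 (shiftR s1 (marker i ?q)) = (i + s1) mod ?q"
    using assms(1) q by (simp add: shiftR_marker reveal1_marker)
  moreover have "reveal1 (shiftR s2 (shiftR s1 (marker 0 ?q))) = (s2 + s1) mod ?q"
    using q unfolding shiftR_shiftR by (simp add: shiftR_marker reveal1_marker)
  moreover have "shiftR (?q - (s2 + s1) mod ?q) (shiftR s2 (shiftR s1 G)) = G"
    unfolding shiftR_shiftR[of s2 s1 G] by (rule shiftR_unshift[OF assms(3)])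
  ultimately show ?thesis
    using assms(2) by (simp add: chosen_cut_def Let_def)
qed

lemma chosen_cut_list_update:
  assumes "i < length cs"
    and "\<And>p row. use p row = (row[p := g (row ! p)], h (row ! p))"
  shows "chosen_cut s1 s2 i cs use = (cs[i := g (cs ! i)], h (cs ! i))"
  using assms by (intro chosen_cut_eqI) (simp_all add: nth_shiftR_shifted shiftR_list_update)

lemma print_stack_honest:
  "print_stack s1 s2 tc ac = (if tc = None then (ac, True) else (tc, ac = None))"
proof -
  let ?i = "if tc = None then 0 else 1 :: nat"
  have "chosen_cut s1 s2 ?i [Some tc, Some ac] (\<lambda>p row. (row[p := None], row ! p = Some None))
      = ([Some tc, Some ac][?i := None], [Some tc, Some ac] ! ?i = Some None)"
    by (rule chosen_cut_list_update) simp_all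
  then show ?thesis by (simp add: print_stack_def)
qed

definition honest_print_step ::
  "nat \<Rightarrow> card list \<Rightarrow> nat \<Rightarrow> nat \<Rightarrow> card list \<times> bool \<Rightarrow> card list \<times> bool" where
  "honest_print_step w T p k = (\<lambda>(ys, ok).
     let a = (p + (k div 5) * w + k mod 5) mod length ys
     in if T ! k = None then (ys, ok) else (ys[a := T ! k], ok \<and> ys ! a = None))"

lemma print_area_honest:
  "print_area rho w T p xs = fold (honest_print_step w T p) [0..<25] (xs, True)"
  unfolding print_area_def honest_print_step_def
  by (intro fold_cong) (auto simp: print_stack_honest Let_def)

lemma length_honest_print_step [simp]:
  "length (fst (honest_print_step w T p k (ys, ok))) = length ys"
  by (simp add: honest_print_step_def Let_def)

lemma honest_print_step_shiftR:
  assumes "ys \<noteq> []"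
  shows "honest_print_step w T ((p + s) mod length ys) k (shiftR s ys, ok)
       = apfst (shiftR s) (honest_print_step w T p k (ys, ok))"
proof -
  define a where "a = (p + (k div 5) * w + k mod 5) mod length ys"
  have a: "a < length ys" using assms by (simp add: a_def)
  have "((p + s) mod length ys + (k div 5) * w + k mod 5) mod length ys
      = (p + s + ((k div 5) * w + k mod 5)) mod length ys"
    by (simp only: add.assoc mod_add_left_eq)
  also have "\<dots> = (a + s) mod length ys"
    unfolding a_def mod_add_left_eq by (simp only: ac_simps)
  finally show ?thesis
    using a by (simp add: honest_print_step_def Let_def a_def[symmetric] nth_shiftR_shifted
        shiftR_list_update)
qed

lemma fold_honest_print_step_shiftR:
  assumes "ys \<noteq> []"
  shows "fold (honest_print_step w T ((p + s) mod length ys)) ks (shiftR s ys, ok)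
       = apfst (shiftR s) (fold (honest_print_step w T p) ks (ys, ok))"
  using assms
proof (induction ks arbitrary: ys ok)
  case (Cons k ks)
  obtain ys' ok' where step: "honest_print_step w T p k (ys, ok) = (ys', ok')" by fastforce
  then have "length ys' = length ys" using length_honest_print_step[of w T p k ys ok] by simp
  moreover from this have "ys' \<noteq> []" using Cons.prems by auto
  ultimately show ?case
    using Cons.IH[of ys' ok'] Cons.prems step
      honest_print_step_shiftR[OF Cons.prems, of w T p s k ok]
    by auto
qed simp

lemma length_fold_honest_print_step:
  "length (fst (fold (honest_print_step w T p) ks st)) = length (fst st)"
  by (induction ks arbitrary: st) (auto simp: honest_print_step_def Let_def split: prod.split)

lemma length_print_area [simp]: "length (fst (print_area rho w T p xs)) = length xs"
  by (simp add: print_area_honest length_fold_honest_print_step)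

lemma print_area_shiftR:
  assumes "xs \<noteq> []"
  shows "print_area rho w T ((p + s) mod length xs) (shiftR s xs)
       = apfst (shiftR s) (print_area rho w T p xs)"
  using fold_honest_print_step_shiftR[OF assms] by (simp add: print_area_honest)

lemma five_cells_round_honest:
  assumes "ti < length ts" "j < length xs"
  shows "five_cells_round ts w rho j ti (xs, map tmpl ts)
       = (case print_area rho w (tmpl (ts ! ti)) j xs of (xs', ok) \<Rightarrow> ((xs', map tmpl ts), ok))"
proof -
  let ?pile = "map tmpl ts"
  let ?T = "tmpl (ts ! ti)"
  have xs: "xs \<noteq> []" using assms(2) by auto
  have template_cut: "chosen_cut (rho 2) (rho 3) ti ?pile
        (\<lambda>p' prow. (prow[p' := []], print_area rho w (prow ! p') p row))
      = (?pile[ti := []], print_area rho w ?T p row)" for p row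
    using chosen_cut_list_update[where g = "\<lambda>_. []" and h = "\<lambda>T. print_area rho w T p row"] assms(1)
    by simp
  obtain xs' ok where pa: "print_area rho w ?T j xs = (xs', ok)" by fastforce
  have area_cut: "chosen_cut (rho 0) (rho 1) j xs
        (\<lambda>p row. (fst (print_area rho w ?T p row), ?pile[ti := []],
                   snd (print_area rho w ?T p row)))
      = (xs', ?pile[ti := []], ok)"
    by (rule chosen_cut_eqI)
      (use assms pa print_area_shiftR[OF xs, of rho w ?T j] length_print_area[of rho w ?T j xs]
        in auto)
  have "(?pile[ti := []])[ti := tmpl (ts ! ti)] = ?pile[ti := ?pile ! ti]" using assms(1) by simp
  also have "\<dots> = ?pile" by (rule list_update_id)
  finally have "(?pile[ti := []])[ti := tmpl (ts ! ti)] = ?pile" .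
  then show ?thesis
    unfolding five_cells_round_def Let_def prod.case template_cut
    unfolding prod.case_eq_if area_cut
    by (simp add: pa templates_ok_def)
qed

section \<open>Pentominoes and their templates\<close>

definition translate :: "int \<Rightarrow> int \<Rightarrow> cell \<Rightarrow> cell" where
  "translate a b = (\<lambda>(r, c). (r - a, c - b))"

lemma inj_translate: "inj (translate a b)"
  by (auto simp: inj_def translate_def)

lemma translate_nbrs: "translate a b ` nbrs x = nbrs (translate a b x)"
  by (cases x) (auto simp: nbrs_def translate_def)

lemma connected_cells_translate:
  assumes "connected_cells S"
  shows "connected_cells (translate a b ` S)"
proof -
  let ?E = "\<lambda>S. {(u, v). u \<in> S \<and> v \<in> S \<and> v \<in> nbrs u}"
  have "(translate a b x, translate a b y) \<in> (?E (translate a b ` S))\<^sup>*"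
    if "(x, y) \<in> (?E S)\<^sup>*" for x y
    using that
  proof (induction rule: rtrancl_induct)
    case (step y z)
    then have "(translate a b y, translate a b z) \<in> ?E (translate a b ` S)"
      by (auto simp flip: translate_nbrs)
    with step.IH show ?case by (rule rtrancl_into_rtrancl)
  qed simp
  then show ?thesis using assms unfolding connected_cells_def by blast
qed

lemma pentomino_translate: "pentomino B \<Longrightarrow> pentomino (translate a b ` B)"
  unfolding pentomino_def
  by (simp add: connected_cells_translate card_image inj_on_subset[OF inj_translate])

lemma Min_translate:
  assumes "finite B" "B \<noteq> {}"
  shows "Min (fst ` translate a b ` B) = Min (fst ` B) - a"
    and "Min (snd ` translate a b ` B) = Min (snd ` B) - b"
proof -
  have "fst ` translate a b ` B = (\<lambda>r. r - a) ` fst ` B"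
    and "snd ` translate a b ` B = (\<lambda>c. c - b) ` snd ` B"
    by (force simp: translate_def image_iff)+
  then show "Min (fst ` translate a b ` B) = Min (fst ` B) - a"
    and "Min (snd ` translate a b ` B) = Min (snd ` B) - b"
    using assms by (simp_all add: mono_Min_commute[symmetric] mono_def)
qed

lemma norm_pent_eq_translate: "norm_pent B = translate (Min (fst ` B)) (Min (snd ` B)) ` B"
  by (simp add: norm_pent_def translate_def)

lemma norm_pent_in_pent_types:
  assumes "pentomino B"
  shows "norm_pent B \<in> pent_types"
proof -
  have "finite B" "B \<noteq> {}" using assms by (auto simp: pentomino_def)
  then show ?thesis
    using assms
    by (simp add: pent_types_def norm_pent_eq_translate pentomino_translate Min_translate)
qed

lemma connected_cells_extent:
  assumes "connected_cells S" "finite S" "x \<in> S"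
    and lipschitz: "\<And>u v. v \<in> nbrs u \<Longrightarrow> \<bar>f v - f u\<bar> \<le> (1::int)"
  shows "f x < Min (f ` S) + int (card S)"
proof -
  have "Min (f ` S) \<in> f ` S" using assms(2,3) by (intro Min_in) auto
  then obtain a where a: "Min (f ` S) = f a" "a \<in> S" by (rule imageE)
  have "(a, x) \<in> {(u, v). u \<in> S \<and> v \<in> S \<and> v \<in> nbrs u}\<^sup>*"
    using assms(1,3) a(2) unfolding connected_cells_def by blast
  then have "{f a..f x} \<subseteq> f ` S"
  proof (induction rule: rtrancl_induct)
    case base
    then show ?case using a(2) by auto
  next
    case (step y z)
    have "\<bar>f z - f y\<bar> \<le> 1" using lipschitz step.hyps(2) by blast
    then have "{f a..f z} \<subseteq> insert (f z) {f a..f y}" by auto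
    moreover have "f z \<in> f ` S" using step.hyps(2) by blast
    ultimately show ?case using step.IH by blast
  qed
  then have "card {f a..f x} \<le> card (f ` S)" using assms(2) by (intro card_mono) auto
  also have "\<dots> \<le> card S" using assms(2) by (rule card_image_le)
  finally have "nat (f x - f a + 1) \<le> card S" by simp
  then show ?thesis using a(1) by linarith
qed

lemma pentomino_extent:
  assumes "pentomino B" "x \<in> B"
  shows "Min (fst ` B) \<le> fst x" "fst x < Min (fst ` B) + 5"
    and "Min (snd ` B) \<le> snd x" "snd x < Min (snd ` B) + 5"
proof -
  have B: "connected_cells B" "finite B" "card B = 5" using assms(1) by (auto simp: pentomino_def)
  have "\<bar>fst v - fst u\<bar> \<le> 1" "\<bar>snd v - snd u\<bar> \<le> 1" if "v \<in> nbrs u" for u v :: cell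
    using that by (auto simp: nbrs_def split: prod.splits)
  then show "fst x < Min (fst ` B) + 5" "snd x < Min (snd ` B) + 5"
    using connected_cells_extent[OF B(1,2) assms(2)] B(3) by force+
  show "Min (fst ` B) \<le> fst x" "Min (snd ` B) \<le> snd x" using B(2) assms(2) by simp_all
qed

definition template_cell :: "cell set \<Rightarrow> nat \<Rightarrow> cell" where
  "template_cell B k = (Min (fst ` B) + int (k div 5), Min (snd ` B) + int (k mod 5))"

lemma inj_template_cell: "inj (template_cell B)"
  by (rule injI) (simp add: template_cell_def, metis div_mult_mod_eq)

lemma pentomino_subset_template_cells:
  assumes "pentomino B"
  shows "B \<subseteq> template_cell B ` {..<25}"
proof
  fix x assume x: "x \<in> B"
  define a where "a = nat (fst x - Min (fst ` B))"
  define b where "b = nat (snd x - Min (snd ` B))"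
  have "a < 5" "b < 5" "int a = fst x - Min (fst ` B)" "int b = snd x - Min (snd ` B)"
    using pentomino_extent[OF assms x] by (auto simp: a_def b_def)
  then have "template_cell B (5 * a + b) = x" "5 * a + b < 25"
    by (auto simp: template_cell_def prod_eq_iff)
  then show "x \<in> template_cell B ` {..<25}" by (metis imageI lessThan_iff)
qed

lemma nth_tmpl_norm_pent:
  assumes "k < 25"
  shows "tmpl (norm_pent B) ! k
       = (if template_cell B k \<in> B then Some (int (card (nbrs (template_cell B k) - B))) else None)"
proof -
  let ?t = "translate (Min (fst ` B)) (Min (snd ` B))"
  let ?x = "template_cell B k"
  have x: "(int (k div 5), int (k mod 5)) = ?t ?x" by (simp add: translate_def template_cell_def)
  have "{y \<in> nbrs (?t ?x). y \<notin> ?t ` B} = ?t ` (nbrs ?x - B)"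
    by (auto simp: image_set_diff[OF inj_translate] simp flip: translate_nbrs)
  then have "card {y \<in> nbrs (?t ?x). y \<notin> ?t ` B} = card (nbrs ?x - B)"
    by (simp add: card_image inj_on_subset[OF inj_translate])
  then show ?thesis
    using assms by (simp add: tmpl_def norm_pent_eq_translate x inj_image_mem_iff[OF inj_translate])
qed

section \<open>Honest executions\<close>

definition cell_at :: "nat \<Rightarrow> nat \<Rightarrow> cell" where
  "cell_at w q = (int (q div w), int (q mod w))"

definition position :: "nat \<Rightarrow> cell \<Rightarrow> nat" where
  "position w x = nat (fst x) * w + nat (snd x)"

lemma position_cell_at [simp]: "position w (cell_at w q) = q"
  by (simp add: position_def cell_at_def)

lemma cell_at_position:
  assumes "0 \<le> fst x" "0 \<le> snd x" "snd x < int w"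
  shows "cell_at w (position w x) = x"
  using assms by (cases x) (simp add: cell_at_def position_def)

lemma position_less:
  assumes "0 \<le> fst x" "fst x < int h" "0 \<le> snd x" "snd x < int w"
  shows "position w x < h * w"
proof -
  have "position w x < (nat (fst x) + 1) * w" using assms by (simp add: position_def)
  also have "\<dots> \<le> h * w" using assms by (intro mult_right_mono) auto
  finally show ?thesis .
qed

lemma topleft_add_offset:
  assumes "0 \<le> Min (fst ` B)" "0 \<le> Min (snd ` B)"
  shows "topleft w B + k div 5 * w + k mod 5 = position w (template_cell B k)"
  using assms
  by (simp add: topleft_def position_def template_cell_def nat_add_distrib algebra_simps)

lemma tidx_correct:
  assumes "T \<in> set ts"
  shows "tidx ts T < length ts" "ts ! tidx ts T = T"
proof -
  have "filter (\<lambda>k. ts ! k = T) [0..<length ts] \<noteq> []"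
    using assms by (auto simp: filter_empty_conv in_set_conv_nth)
  then have "tidx ts T \<in> set (filter (\<lambda>k. ts ! k = T) [0..<length ts])"
    unfolding tidx_def by (rule hd_in_set)
  then show "tidx ts T < length ts" "ts ! tidx ts T = T" by auto
qed

definition honest_round ::
  "cell set list \<Rightarrow> nat \<Rightarrow> (nat \<Rightarrow> nat \<Rightarrow> nat) \<Rightarrow> nat \<times> cell set
     \<Rightarrow> (card list \<times> card list list) \<times> bool \<Rightarrow> (card list \<times> card list list) \<times> bool" where
  "honest_round ts w R = (\<lambda>(i, B) (st, ok).
     let (st', ok') = five_cells_round ts w (R i) (topleft w B) (tidx ts (norm_pent B)) st
     in (st', ok \<and> ok'))"

locale five_cells_solution =
  fixes m n :: nat and clue :: "cell \<Rightarrow> nat option" and Ps :: "cell set set"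
  assumes solution: "is_solution m n clue Ps"
begin

abbreviation width :: nat where "width \<equiv> n + 4"

abbreviation num_cards :: nat where "num_cards \<equiv> (m + 4) * (n + 4)"

abbreviation solution_card :: "cell \<Rightarrow> card" where
  "solution_card x \<equiv> Some (int (border_count Ps x))"

lemma pentomino_of_solution: "B \<in> Ps \<Longrightarrow> pentomino B"
  using solution by (simp add: is_solution_def)

lemma subset_grid: "B \<in> Ps \<Longrightarrow> B \<subseteq> grid m n"
  using solution by (auto simp: is_solution_def)

lemma solution_disjoint: "B \<in> Ps \<Longrightarrow> B' \<in> Ps \<Longrightarrow> B \<noteq> B' \<Longrightarrow> B \<inter> B' = {}"
  using solution by (simp add: is_solution_def)

lemma Union_eq_grid: "\<Union>Ps = grid m n"
  using solution by (simp add: is_solution_def)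

lemma border_count_clue: "clue x = Some v \<Longrightarrow> border_count Ps x = v"
  using solution unfolding is_solution_def by blast

lemma border_count_eq:
  assumes "B \<in> Ps" "x \<in> B"
  shows "border_count Ps x = card (nbrs x - B)"
proof -
  have "{y \<in> nbrs x. \<not> (\<exists>B'\<in>Ps. x \<in> B' \<and> y \<in> B')} = nbrs x - B"
    using assms solution_disjoint by blast
  then show ?thesis by (simp add: border_count_def)
qed

lemma Min_coords_in_grid:
  assumes "B \<in> Ps"
  shows "(Min (fst ` B), Min (snd ` B)) \<in> grid m n"
proof -
  have "finite B" "B \<noteq> {}" using pentomino_of_solution[OF assms] by (auto simp: pentomino_def)
  then have "Min (fst ` B) \<in> fst ` B" "Min (snd ` B) \<in> snd ` B" by simp_all
  then show ?thesis using subset_grid[OF assms] by (auto simp: grid_def)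
qed

text \<open>The card sequence once the pentominoes covering C have been printed.\<close>

definition board :: "cell set \<Rightarrow> card list" where
  "board C = map (\<lambda>q. if cell_at width q \<in> C then solution_card (cell_at width q) else None)
     [0..<num_cards]"

lemma length_board [simp]: "length (board C) = num_cards"
  by (simp add: board_def)

lemma position_less_grid: "x \<in> grid m n \<Longrightarrow> position width x < num_cards"
  by (rule position_less) (auto simp: grid_def)

lemma cell_at_position_grid: "x \<in> grid m n \<Longrightarrow> cell_at width (position width x) = x"
  by (rule cell_at_position) (auto simp: grid_def)

lemma board_insert:
  assumes "x \<in> grid m n"
  shows "(board C)[position width x := solution_card x] = board (insert x C)"
proof (rule nth_equalityI)
  fix q assume "q < length ((board C)[position width x := solution_card x])"
  then have q: "q < num_cards" by simp
  have "q = position width x \<longleftrightarrow> cell_at width q = x"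
    using cell_at_position_grid[OF assms] position_cell_at[of width q] by metis
  then show "(board C)[position width x := solution_card x] ! q = board (insert x C) ! q"
    using q by (auto simp: board_def nth_list_update)
qed simp

lemma fold_print_board:
  assumes B: "B \<in> Ps" "B \<inter> C = {}" and "k \<le> 25"
  shows "fold (honest_print_step width (tmpl (norm_pent B)) (topleft width B)) [0..<k]
           (board C, True)
       = (board (C \<union> (B \<inter> template_cell B ` {..<k})), True)"
  using \<open>k \<le> 25\<close>
proof (induction k)
  case (Suc k)
  let ?x = "template_cell B k"
  let ?C = "C \<union> (B \<inter> template_cell B ` {..<k})"
  have fold_Suc: "fold (honest_print_step width (tmpl (norm_pent B)) (topleft width B)) [0..<Suc k]
        (board C, True)
      = honest_print_step width (tmpl (norm_pent B)) (topleft width B) k (board ?C, True)"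
    using Suc by simp
  show ?case
  proof (cases "?x \<in> B")
    case True
    have grid: "?x \<in> grid m n" using True subset_grid[OF B(1)] by blast
    have "topleft width B + k div 5 * width + k mod 5 = position width ?x"
      using Min_coords_in_grid[OF B(1)] by (intro topleft_add_offset) (auto simp: grid_def)
    then have addr:
      "(topleft width B + k div 5 * width + k mod 5) mod length (board ?C) = position width ?x"
      using position_less_grid[OF grid] by simp
    have "?x \<notin> ?C" using True B(2) inj_template_cell[of B] by (auto simp: inj_eq)
    then have blank: "board ?C ! position width ?x = None"
      using position_less_grid[OF grid] cell_at_position_grid[OF grid] by (simp add: board_def)
    have card: "tmpl (norm_pent B) ! k = solution_card ?x"
      using Suc.prems True by (simp add: nth_tmpl_norm_pent border_count_eq[OF B(1)])
    have "honest_print_step width (tmpl (norm_pent B)) (topleft width B) k (board ?C, True)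
        = (board (insert ?x ?C), True)"
      using addr blank card board_insert[OF grid] by (simp add: honest_print_step_def)
    moreover have "C \<union> (B \<inter> template_cell B ` {..<Suc k}) = insert ?x ?C"
      using True by (auto simp: lessThan_Suc)
    ultimately show ?thesis using fold_Suc by simp
  next
    case False
    then have "tmpl (norm_pent B) ! k = None" using Suc.prems by (simp add: nth_tmpl_norm_pent)
    then have "honest_print_step width (tmpl (norm_pent B)) (topleft width B) k (board ?C, True)
        = (board ?C, True)"
      by (simp add: honest_print_step_def)
    moreover have "C \<union> (B \<inter> template_cell B ` {..<Suc k}) = ?C"
      using False by (auto simp: lessThan_Suc)
    ultimately show ?thesis using fold_Suc by simp
  qed
qed simp

lemma print_area_board:
  assumes "B \<in> Ps" "B \<inter> C = {}"
  shows "print_area rho width (tmpl (norm_pent B)) (topleft width B) (board C)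
       = (board (C \<union> B), True)"
proof -
  have "B \<inter> template_cell B ` {..<25} = B"
    using pentomino_subset_template_cells[OF pentomino_of_solution[OF assms(1)]] by blast
  then show ?thesis using fold_print_board[OF assms, of 25] by (simp add: print_area_honest)
qed

lemma topleft_less: "B \<in> Ps \<Longrightarrow> topleft width B < num_cards"
  using position_less_grid[OF Min_coords_in_grid] by (simp add: topleft_def position_def)

lemma five_cells_round_board:
  assumes "B \<in> Ps" "B \<inter> C = {}" "norm_pent B \<in> set ts"
  shows "five_cells_round ts width rho (topleft width B) (tidx ts (norm_pent B))
           (board C, map tmpl ts)
       = ((board (C \<union> B), map tmpl ts), True)"
proof -
  have "topleft width B < length (board C)" using topleft_less[OF assms(1)] by simp
  with tidx_correct[OF assms(3)]
  have "five_cells_round ts width rho (topleft width B) (tidx ts (norm_pent B))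
          (board C, map tmpl ts)
      = (case print_area rho width (tmpl (norm_pent B)) (topleft width B) (board C) of
           (xs', ok) \<Rightarrow> ((xs', map tmpl ts), ok))"
    by (simp only: five_cells_round_honest)
  then show ?thesis by (simp only: print_area_board[OF assms(1,2)] prod.case)
qed

lemma fold_honest_round_board:
  assumes "pent_types \<subseteq> set ts" "distinct (map snd Cs)" "snd ` set Cs \<subseteq> Ps"
    and "C \<inter> \<Union>(snd ` set Cs) = {}"
  shows "fold (honest_round ts width R) Cs ((board C, map tmpl ts), True)
       = ((board (C \<union> \<Union>(snd ` set Cs)), map tmpl ts), True)"
  using assms(2-)
proof (induction Cs arbitrary: C)
  case (Cons c Cs)
  obtain i B where c: "c = (i, B)" by fastforce
  have B: "B \<in> Ps" "B \<inter> C = {}" "B \<notin> snd ` set Cs" using Cons.prems c by auto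
  have "norm_pent B \<in> set ts"
    using assms(1) norm_pent_in_pent_types[OF pentomino_of_solution[OF B(1)]] by blast
  then have "honest_round ts width R c ((board C, map tmpl ts), True)
      = ((board (C \<union> B), map tmpl ts), True)"
    using five_cells_round_board[OF B(1,2)] by (simp add: honest_round_def c)
  moreover have "B \<inter> B' = {}" if "B' \<in> snd ` set Cs" for B'
    using solution_disjoint[OF B(1), of B'] that B(3) Cons.prems(2) by auto
  then have "(C \<union> B) \<inter> \<Union>(snd ` set Cs) = {}" using Cons.prems(3) by auto
  moreover have "C \<union> B \<union> \<Union>(snd ` set Cs) = C \<union> \<Union>(snd ` set (c # Cs))" using c by auto
  ultimately show ?case using Cons.IH[of "C \<union> B"] Cons.prems(1,2) by simp
qed simp

lemma board_grid_accepted: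
  assumes "q < num_cards"
  shows "if q div width < m \<and> q mod width < n
         then (case clue (int (q div width), int (q mod width)) of
                 None \<Rightarrow> True
               | Some v \<Rightarrow> board (grid m n) ! q = Some (int v))
         else board (grid m n) ! q = None"
proof -
  have grid: "cell_at width q \<in> grid m n \<longleftrightarrow> q div width < m \<and> q mod width < n"
    by (auto simp: cell_at_def grid_def)
  show ?thesis
    using assms grid border_count_clue by (auto simp: board_def cell_at_def split: option.split)
qed

end

theorem lemma1:
  fixes m n :: nat
    and clue :: "cell \<Rightarrow> nat option"
    and ts :: "cell set list"
    and Ps :: "cell set set"
    and Bs :: "cell set list"
    and R :: "nat \<Rightarrow> nat \<Rightarrow> nat"
  assumes "\<forall>x. clue x \<noteq> None \<longrightarrow> x \<in> grid m n"
    and "distinct ts" and "set ts = pent_types"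
    and "is_solution m n clue Ps"
    and "distinct Bs" and "set Bs = Ps"
  shows "five_cells_accepts m n clue ts Bs R"
proof -
  \<comment> \<open>Clues outside the grid are never checked, and tidx picks the first occurrence of a
    type.\<close>
  interpret five_cells_solution m n clue Ps by unfold_locales (rule assms(4))
  let ?L = "(m + 4) * (n + 4)"
  let ?Cs = "zip [0..<length Bs] Bs"
  have "map snd ?Cs = Bs" by simp
  then have "distinct (map snd ?Cs)" "snd ` set ?Cs = Ps" using assms(5,6) by (metis set_map)+
  moreover have "replicate ?L None = board {}" by (simp add: board_def map_replicate_const)
  ultimately have "fold (honest_round ts (n + 4) R) ?Cs ((replicate ?L None, map tmpl ts), True)
      = ((board (grid m n), map tmpl ts), True)"
    using fold_honest_round_board[of ts ?Cs "{}" R] assms(3) Union_eq_grid by simp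
  then show ?thesis
    using board_grid_accepted
    unfolding five_cells_accepts_def Let_def honest_round_def[unfolded Let_def, symmetric]
    by (simp add: templates_ok_def)
qed

end
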